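(* Let $T:X\to X$ be a map with $\mathcal F_T(n)=|\{x\in X: T^nx=x\}|<\infty$ for all $n\ge1$. Let $m\ge1$ have prime factorization $m=p_1^{a_1}\cdots p_r^{a_r}$, let $n\ge1$, and let $J=\mathcal D(m)\setminus\mathcal D(n)$, where $\mathcal D(k)$ denotes the set of prime divisors of $k$. Write $\boldsymbol p_J^{\boldsymbol a_J}=\prod_{p_j\in J}p_j^{a_j}$. Then \[ \mathcal O_{T^m}(n)=\sum_{d\mid \boldsymbol p_J^{\boldsymbol a_J}}\frac{m}{d}\,\mathcal O_T\!\left(\frac{mn}{d}\right), \] where $T^m$ is the $m$th iterate of $T$.
   Context: For a map $S:X\to X$, a closed orbit of length $n$ is a set $\{x,Sx,\dots,S^{n-1}x\}$ with $S^nx=x$ having exactly $n$ elements; $\mathcal O_S(n)$ denotes the number of closed orbits of length $n$ under $S$. *)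

theory Defs
  imports "HOL-Computational_Algebra.Computational_Algebra"
begin

definition closed_orbits :: "('a \<Rightarrow> 'a) \<Rightarrow> nat \<Rightarrow> 'a set set" where
  "closed_orbits S n = {{(S ^^ k) x | k. k < n} | x.
      (S ^^ n) x = x \<and> card {(S ^^ k) x | k. k < n} = n}"

definition orbit_count :: "('a \<Rightarrow> 'a) \<Rightarrow> nat \<Rightarrow> nat" where
  "orbit_count S n = card (closed_orbits S n)"

definition fixed_points :: "('a \<Rightarrow> 'a) \<Rightarrow> nat \<Rightarrow> 'a set" where
  "fixed_points T n = {x. (T ^^ n) x = x}"

end

theory Submission
  imports Defs
begin

text \<open>
  Every periodic point has a least period, and the points of least period \<open>k\<close> are the disjoint
  union of the closed orbits of length \<open>k\<close>, so there are exactly \<open>k \<cdot> O\<^sub>T(k)\<close> of them.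
  A point of least period \<open>k\<close> under \<open>T\<close> has least period \<open>k / gcd(k, m)\<close> under \<open>T\<^sup>m\<close>, and
  \<open>k / gcd(k, m) = n\<close> holds exactly when \<open>k = (m / d) n\<close> for a divisor \<open>d\<close> of \<open>m\<close> coprime
  to \<open>n\<close>; these \<open>d\<close> are precisely the divisors of the part of \<open>m\<close> made of primes not
  dividing \<open>n\<close>. So the \<open>n \<cdot> O\<^bsub>T\<^sup>m\<^esub>(n)\<close> points of least period \<open>n\<close> under \<open>T\<^sup>m\<close> split
  into \<open>(m / d) n \<cdot> O\<^sub>T((m / d) n)\<close> points for each such \<open>d\<close>; dividing by \<open>n\<close> gives the formula.
\<close>

definition least_period :: "('a \<Rightarrow> 'a) \<Rightarrow> nat \<Rightarrow> 'a \<Rightarrow> bool" where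
  "least_period S n x \<longleftrightarrow> 0 < n \<and> (\<forall>j. (S ^^ j) x = x \<longleftrightarrow> n dvd j)"

lemma least_period_pos: "least_period S n x \<Longrightarrow> 0 < n"
  unfolding least_period_def by simp

lemma least_period_funpow_self: "least_period S n x \<Longrightarrow> (S ^^ n) x = x"
  unfolding least_period_def by simp

lemma least_period_unique: "least_period S k x \<Longrightarrow> least_period S k' x \<Longrightarrow> k = k'"
  unfolding least_period_def by (metis dvd_antisym dvd_refl)

lemma funpow_funpow_apply: "(S ^^ a) ((S ^^ b) x) = (S ^^ (a + b)) x"
  by (simp add: funpow_add)

lemma funpow_mult_fixed: "(S ^^ n) x = x \<Longrightarrow> (S ^^ (n * i)) x = x"
  by (induction i) (simp_all add: funpow_add)

lemma least_period_exists:
  assumes "0 < N" "(S ^^ N) x = x"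
  shows "\<exists>k. least_period S k x"
proof -
  define k where "k = (LEAST k. 0 < k \<and> (S ^^ k) x = x)"
  have k: "0 < k" "(S ^^ k) x = x"
    using LeastI[of "\<lambda>k. 0 < k \<and> (S ^^ k) x = x", OF conjI, OF assms] unfolding k_def by auto
  have "(S ^^ j) x = x \<longleftrightarrow> k dvd j" for j
  proof
    assume "(S ^^ j) x = x"
    then have "(S ^^ (j mod k)) x = x"
      by (simp add: funpow_mod_eq k(2))
    moreover have "j mod k < k"
      using k(1) by simp
    ultimately have "j mod k = 0"
      using not_less_Least[of "j mod k" "\<lambda>k. 0 < k \<and> (S ^^ k) x = x"] unfolding k_def by auto
    then show "k dvd j" by auto
  next
    assume "k dvd j"
    then obtain i where "j = k * i" ..
    then show "(S ^^ j) x = x"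
      using funpow_mult_fixed[OF k(2)] by simp
  qed
  then show ?thesis
    using k(1) unfolding least_period_def by auto
qed

definition forward_orbit :: "('a \<Rightarrow> 'a) \<Rightarrow> 'a \<Rightarrow> 'a set" where
  "forward_orbit S x = range (\<lambda>k. (S ^^ k) x)"

lemma self_in_forward_orbit: "x \<in> forward_orbit S x"
  unfolding forward_orbit_def by (metis funpow_0 rangeI)

lemma forward_orbit_subset: "y \<in> forward_orbit S x \<Longrightarrow> forward_orbit S y \<subseteq> forward_orbit S x"
  unfolding forward_orbit_def by (auto simp: funpow_funpow_apply)

lemma funpow_fixed_forward_orbit:
  assumes "y \<in> forward_orbit S x" "(S ^^ j) x = x"
  shows "(S ^^ j) y = y"
proof -
  obtain i where y: "y = (S ^^ i) x"
    using assms(1) unfolding forward_orbit_def by auto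
  have "(S ^^ j) y = (S ^^ i) ((S ^^ j) x)"
    unfolding y funpow_funpow_apply by (simp add: add.commute)
  then show ?thesis
    using assms(2) y by simp
qed

lemma periodic_in_forward_orbit:
  assumes "0 < n" "(S ^^ n) x = x" "y \<in> forward_orbit S x"
  shows "x \<in> forward_orbit S y"
proof -
  obtain i where y: "y = (S ^^ i) x"
    using assms(3) unfolding forward_orbit_def by auto
  have "(S ^^ ((n - 1) * i)) y = (S ^^ (n * i)) x"
    using assms(1) unfolding y funpow_funpow_apply by (simp add: algebra_simps)
  also have "\<dots> = x"
    using funpow_mult_fixed[OF assms(2)] .
  finally show ?thesis
    unfolding forward_orbit_def by (metis rangeI)
qed

lemma forward_orbit_eq:
  assumes "0 < n" "(S ^^ n) x = x" "y \<in> forward_orbit S x"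
  shows "forward_orbit S y = forward_orbit S x"
  using forward_orbit_subset[OF assms(3)] forward_orbit_subset[OF periodic_in_forward_orbit[OF assms]]
  by (rule subset_antisym)

lemma least_period_forward_orbit:
  assumes "least_period S n x" "y \<in> forward_orbit S x"
  shows "least_period S n y"
proof -
  have "x \<in> forward_orbit S y"
    using periodic_in_forward_orbit[OF least_period_pos least_period_funpow_self, OF assms(1,1,2)] .
  then have "(S ^^ j) y = y \<longleftrightarrow> (S ^^ j) x = x" for j
    using funpow_fixed_forward_orbit[OF assms(2)]
      funpow_fixed_forward_orbit[OF \<open>x \<in> forward_orbit S y\<close>]
    by blast
  then show ?thesis
    using assms(1) unfolding least_period_def by simp
qed

lemma forward_orbit_periodic:
  assumes "0 < n" "(S ^^ n) x = x"
  shows "{(S ^^ k) x | k. k < n} = forward_orbit S x"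
  unfolding forward_orbit_def
  using assms funpow_mod_eq[where f = S and n = n and x = x]
  by (auto intro!: exI[of _ "_ mod n"])

lemma card_forward_orbit_least_period:
  assumes "least_period S n x"
  shows "card {(S ^^ k) x | k. k < n} = n"
proof -
  have "inj_on (\<lambda>k. (S ^^ k) x) {..<n}"
  proof (rule linorder_inj_onI)
    fix a b assume ab: "a < b" "b \<in> {..<n}"
    show "(S ^^ a) x \<noteq> (S ^^ b) x"
    proof
      assume eq: "(S ^^ a) x = (S ^^ b) x"
      have "(S ^^ (b - a)) ((S ^^ a) x) = (S ^^ b) x"
        using ab(1) by (simp add: funpow_funpow_apply)
      then have "(S ^^ (b - a)) ((S ^^ a) x) = (S ^^ a) x"
        by (simp add: eq)
      moreover have "least_period S n ((S ^^ a) x)"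
        using least_period_forward_orbit[OF assms] unfolding forward_orbit_def by simp
      ultimately have "n dvd b - a"
        unfolding least_period_def by simp
      then show False
        using ab by (simp add: nat_dvd_not_less)
    qed
  qed auto
  moreover have "{(S ^^ k) x | k. k < n} = (\<lambda>k. (S ^^ k) x) ` {..<n}"
    by auto
  ultimately show ?thesis
    by (simp add: card_image)
qed

lemma closed_orbits_eq_forward_orbits:
  assumes "0 < n"
  shows "closed_orbits S n = forward_orbit S ` {x. least_period S n x}"
proof (intro set_eqI iffI)
  fix A assume "A \<in> closed_orbits S n"
  then obtain x where x: "A = {(S ^^ k) x | k. k < n}" "(S ^^ n) x = x"
    "card {(S ^^ k) x | k. k < n} = n"
    unfolding closed_orbits_def by auto
  obtain k where k: "least_period S k x"
    using least_period_exists[OF assms x(2)] by blast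
  have "k = card (forward_orbit S x)"
    using card_forward_orbit_least_period[OF k]
      forward_orbit_periodic[OF least_period_pos[OF k] least_period_funpow_self[OF k]]
    by simp
  also have "\<dots> = n"
    using x(3) forward_orbit_periodic[OF assms x(2)] by simp
  finally show "A \<in> forward_orbit S ` {x. least_period S n x}"
    using k x(1) forward_orbit_periodic[OF assms x(2)] by auto
next
  fix A assume "A \<in> forward_orbit S ` {x. least_period S n x}"
  then obtain x where x: "A = forward_orbit S x" "least_period S n x"
    by auto
  then show "A \<in> closed_orbits S n"
    using forward_orbit_periodic[OF assms least_period_funpow_self[OF x(2)]]
      card_forward_orbit_least_period[OF x(2)] least_period_funpow_self[OF x(2)]
    unfolding closed_orbits_def by (auto intro!: exI[of _ x])
qed

lemma finite_least_period: "finite (fixed_points S n) \<Longrightarrow> finite {x. least_period S n x}"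
  unfolding fixed_points_def
  by (rule finite_subset[rotated]) (auto simp: least_period_funpow_self)

lemma card_least_period:
  assumes "0 < n" "finite (fixed_points S n)"
  shows "card {x. least_period S n x} = n * orbit_count S n"
proof -
  let ?P = "{x. least_period S n x}"
  have fin: "finite ?P"
    using finite_least_period[OF assms(2)] .
  have union: "\<Union>(forward_orbit S ` ?P) = ?P"
  proof
    show "\<Union>(forward_orbit S ` ?P) \<subseteq> ?P"
      using least_period_forward_orbit by auto
    show "?P \<subseteq> \<Union>(forward_orbit S ` ?P)"
      using self_in_forward_orbit[of _ S] by blast
  qed
  have card: "card (forward_orbit S x) = n" if "x \<in> ?P" for x
    using card_forward_orbit_least_period[of S n x]
      forward_orbit_periodic[OF assms(1) least_period_funpow_self[of S n x]] that by simp
  have disjoint: "forward_orbit S x \<inter> forward_orbit S y = {}"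
    if "x \<in> ?P" "y \<in> ?P" "forward_orbit S x \<noteq> forward_orbit S y" for x y
  proof (rule ccontr)
    assume "forward_orbit S x \<inter> forward_orbit S y \<noteq> {}"
    then obtain z where "z \<in> forward_orbit S x" "z \<in> forward_orbit S y"
      by blast
    then have "forward_orbit S z = forward_orbit S x" "forward_orbit S z = forward_orbit S y"
      using forward_orbit_eq[OF assms(1) least_period_funpow_self] that(1,2) by simp_all
    then show False
      using that(3) by simp
  qed
  have "n * card (forward_orbit S ` ?P) = card (\<Union>(forward_orbit S ` ?P))"
  proof (rule card_partition)
    show "finite (forward_orbit S ` ?P)" "finite (\<Union>(forward_orbit S ` ?P))"
      using fin union by simp_all
    show "card c = n" if "c \<in> forward_orbit S ` ?P" for c
      using that card by blast
    show "c1 \<inter> c2 = {}" if "c1 \<in> forward_orbit S ` ?P" "c2 \<in> forward_orbit S ` ?P" "c1 \<noteq> c2"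
      for c1 c2
      using that disjoint by blast
  qed
  then show ?thesis
    using union
    unfolding orbit_count_def closed_orbits_eq_forward_orbits[OF assms(1)] by simp
qed

lemma least_period_funpow:
  assumes "least_period T k x"
  shows "least_period (T ^^ m) (k div gcd k m) x"
proof -
  define g where "g = gcd k m"
  have "0 < k"
    using least_period_pos[OF assms] .
  then have "0 < g" "0 < k div g"
    unfolding g_def by (simp_all add: div_greater_zero_iff gcd_le1_nat)
  have coprime: "coprime (k div g) (m div g)"
    using div_gcd_coprime \<open>0 < k\<close> unfolding g_def by blast
  have "((T ^^ m) ^^ j) x = x \<longleftrightarrow> g * (k div g) dvd g * ((m div g) * j)" for j
    using assms unfolding least_period_def g_def by (simp add: funpow_mult mult.assoc[symmetric])
  also have "\<dots> j \<longleftrightarrow> k div g dvd j" for j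
    using \<open>0 < g\<close> coprime by (simp add: coprime_dvd_mult_right_iff)
  finally show ?thesis
    using \<open>0 < k div g\<close> unfolding least_period_def g_def by simp
qed

lemma div_gcd_eq_iff:
  fixes k m n :: nat
  assumes "0 < k" "0 < m"
  shows "k div gcd k m = n \<longleftrightarrow> (\<exists>d. d dvd m \<and> coprime d n \<and> k = m div d * n)"
proof
  assume n: "k div gcd k m = n"
  define g where "g = gcd k m"
  have k: "k = g * n" and m: "m = g * (m div g)"
    using n unfolding g_def by (metis dvd_mult_div_cancel gcd_dvd1, simp)
  have "coprime n (m div g)"
    using div_gcd_coprime[of k m] assms n unfolding g_def by simp
  moreover have "m div g dvd m"
    using m by (metis dvd_triv_right)
  moreover have "m div (m div g) = g"
    using div_div_eq_right[of g m m] assms(2) unfolding g_def by simp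
  ultimately show "\<exists>d. d dvd m \<and> coprime d n \<and> k = m div d * n"
    using k by (intro exI[of _ "m div g"]) (simp add: coprime_commute mult.commute)
next
  assume "\<exists>d. d dvd m \<and> coprime d n \<and> k = m div d * n"
  then obtain d e where d: "m = d * e" "coprime d n" "k = e * n"
    using assms(2) by (auto elim!: dvdE)
  have "0 < e"
    using d assms by auto
  have "gcd k m = e * gcd n d"
    unfolding d by (simp add: gcd_mult_distrib_nat mult.commute)
  then show "k div gcd k m = n"
    using d \<open>0 < e\<close> by (simp add: coprime_commute)
qed

lemma least_period_funpow_iff:
  assumes "least_period T k x" "0 < m"
  shows "least_period (T ^^ m) n x \<longleftrightarrow> (\<exists>d. d dvd m \<and> coprime d n \<and> k = m div d * n)"
proof -
  have "least_period (T ^^ m) n x \<longleftrightarrow> k div gcd k m = n"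
    using least_period_unique[OF _ least_period_funpow[OF assms(1)]] least_period_funpow[OF assms(1)]
    by blast
  also have "\<dots> \<longleftrightarrow> (\<exists>d. d dvd m \<and> coprime d n \<and> k = m div d * n)"
    using div_gcd_eq_iff[OF least_period_pos[OF assms(1)] assms(2)] .
  finally show ?thesis .
qed

lemma least_period_funpow_eq_UN:
  assumes "0 < m"
  shows "{x. least_period (T ^^ m) n x} =
    (\<Union>d \<in> {d. d dvd m \<and> coprime d n}. {x. least_period T (m div d * n) x})"
proof (intro set_eqI iffI)
  fix x assume "x \<in> {x. least_period (T ^^ m) n x}"
  then have x: "least_period (T ^^ m) n x"
    by simp
  have "(T ^^ (m * n)) x = x"
    using least_period_funpow_self[OF x] by (simp add: funpow_mult)
  moreover have "0 < m * n"
    using assms least_period_pos[OF x] by simp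
  ultimately obtain k where k: "least_period T k x"
    using least_period_exists[of "m * n" T x] by blast
  then obtain d where "d dvd m" "coprime d n" "k = m div d * n"
    using x least_period_funpow_iff[OF k assms] by blast
  then show "x \<in> (\<Union>d \<in> {d. d dvd m \<and> coprime d n}. {x. least_period T (m div d * n) x})"
    using k by blast
next
  fix x assume "x \<in> (\<Union>d \<in> {d. d dvd m \<and> coprime d n}. {x. least_period T (m div d * n) x})"
  then obtain d where "d dvd m" "coprime d n" and k: "least_period T (m div d * n) x"
    by blast
  then show "x \<in> {x. least_period (T ^^ m) n x}"
    using least_period_funpow_iff[OF k assms] by blast
qed

lemma inj_on_complementary_divisor_mult:
  fixes m n :: nat
  assumes "0 < m" "0 < n"
  shows "inj_on (\<lambda>d. m div d * n) {d. d dvd m}"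
proof (rule inj_onI)
  fix d d' assume d: "d \<in> {d. d dvd m}" "d' \<in> {d. d dvd m}" "m div d * n = m div d' * n"
  then have "m div (m div d) = m div (m div d')"
    using assms(2) by simp
  then show "d = d'"
    using d(1,2) assms(1) by (simp add: div_div_eq_right)
qed

lemma orbit_count_funpow:
  assumes fin: "\<And>k. 0 < k \<Longrightarrow> finite (fixed_points T k)" and "0 < m" "0 < n"
  shows "orbit_count (T ^^ m) n =
    (\<Sum>d | d dvd m \<and> coprime d n. m div d * orbit_count T (m div d * n))"
proof -
  let ?D = "{d. d dvd m \<and> coprime d n}"
  let ?P = "\<lambda>d. {x. least_period T (m div d * n) x}"
  have pos: "0 < m div d * n" if "d \<in> ?D" for d
    using that assms by (auto elim!: dvdE)
  have "finite ?D"
    using assms(2) by (auto intro: finite_subset[OF _ finite_divisors_nat])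
  have disjoint: "?P d \<inter> ?P d' = {}" if "d \<in> ?D" "d' \<in> ?D" "d \<noteq> d'" for d d'
  proof -
    have "m div d * n \<noteq> m div d' * n"
      using that inj_on_complementary_divisor_mult[OF assms(2,3)] unfolding inj_on_def by blast
    then show ?thesis
      unfolding disjoint_iff mem_Collect_eq using least_period_unique by metis
  qed
  have "fixed_points (T ^^ m) n = fixed_points T (m * n)"
    unfolding fixed_points_def by (simp add: funpow_mult)
  then have "n * orbit_count (T ^^ m) n = card {x. least_period (T ^^ m) n x}"
    using card_least_period[OF assms(3), of "T ^^ m"] fin[of "m * n"] assms(2,3) by simp
  also have "\<dots> = (\<Sum>d \<in> ?D. card (?P d))"
    unfolding least_period_funpow_eq_UN[OF assms(2)]
  proof (rule card_UN_disjoint[OF \<open>finite ?D\<close>])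
    show "\<forall>d \<in> ?D. finite (?P d)"
      using finite_least_period fin pos by blast
  qed (use disjoint in blast)
  also have "\<dots> = (\<Sum>d \<in> ?D. n * (m div d * orbit_count T (m div d * n)))"
  proof (rule sum.cong)
    fix d assume "d \<in> ?D"
    then show "card (?P d) = n * (m div d * orbit_count T (m div d * n))"
      using card_least_period[OF pos fin[OF pos]] by (simp add: mult_ac)
  qed simp
  also have "\<dots> = n * (\<Sum>d \<in> ?D. m div d * orbit_count T (m div d * n))"
    by (rule sum_distrib_left[symmetric])
  finally show ?thesis
    using assms(3) by simp
qed

lemma dvd_prod_prime_factors_diff_iff:
  fixes m n d :: nat
  assumes "0 < m" "0 < n"
  shows "d dvd (\<Prod>p \<in> prime_factors m - prime_factors n. p ^ multiplicity p m) \<longleftrightarrow>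
    d dvd m \<and> coprime d n"
    (is "d dvd ?P \<longleftrightarrow> _")
proof -
  have multiplicity_P: "multiplicity p ?P =
      (if p \<in> prime_factors m - prime_factors n then multiplicity p m else 0)" if "prime p" for p
    by (rule multiplicity_prod_prime_powers) (auto simp: that)
  have "?P \<noteq> 0"
    by (auto simp: in_prime_factors_iff)
  have P_dvd: "?P dvd m"
    by (rule multiplicity_le_imp_dvd[OF \<open>?P \<noteq> 0\<close>]) (simp add: multiplicity_P)
  have P_coprime: "coprime ?P n"
  proof (rule prod_coprime_left)
    fix p assume "p \<in> prime_factors m - prime_factors n"
    then have "prime p" "\<not> p dvd n"
      using assms by (auto simp: in_prime_factors_iff)
    then show "coprime (p ^ multiplicity p m) n"
      by (simp add: prime_imp_coprime)
  qed
  have "d dvd ?P" if d: "d dvd m" "coprime d n"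
  proof (rule multiplicity_le_imp_dvd)
    show "d \<noteq> 0"
      using d assms by auto
    fix p :: nat assume p: "prime p"
    show "multiplicity p d \<le> multiplicity p ?P"
    proof (cases "p dvd d")
      case True
      have "\<not> p dvd n"
        using True d(2) p by (meson coprime_common_divisor not_prime_unit)
      moreover have "p dvd m"
        using dvd_trans[OF True d(1)] .
      ultimately have "p \<in> prime_factors m - prime_factors n"
        using p assms by (auto simp: in_prime_factors_iff)
      then show ?thesis
        using multiplicity_P[OF p] dvd_imp_multiplicity_le[OF d(1)] assms(1) by simp
    next
      case False
      then show ?thesis
        by (simp add: not_dvd_imp_multiplicity_0)
    qed
  qed
  moreover have "d dvd m \<and> coprime d n" if "d dvd ?P"
    using dvd_trans[OF that P_dvd] coprime_divisors[OF that dvd_refl P_coprime] by simp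
  ultimately show ?thesis
    by blast
qed

theorem theorem2p1:
  fixes T :: "'a \<Rightarrow> 'a" and m n :: nat
  assumes fin: "\<And>k. k \<ge> 1 \<Longrightarrow> finite (fixed_points T k)"
    and m: "m \<ge> 1" and n: "n \<ge> 1"
  shows "orbit_count (T ^^ m) n =
    (\<Sum>d \<in> {d. d dvd (\<Prod>p \<in> prime_factors m - prime_factors n. p ^ multiplicity p m)}.
        (m div d) * orbit_count T (m * n div d))"
proof -
  have "0 < m" "0 < n"
    using m n by simp_all
  have divisors: "{d. d dvd (\<Prod>p \<in> prime_factors m - prime_factors n. p ^ multiplicity p m)} =
      {d. d dvd m \<and> coprime d n}"
    using dvd_prod_prime_factors_diff_iff[OF \<open>0 < m\<close> \<open>0 < n\<close>] by blast
  have "m * n div d = m div d * n" if "d dvd m" for d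
    using that by (simp add: div_mult_swap mult.commute)
  then show ?thesis
    unfolding divisors
    using orbit_count_funpow[of T m n] fin \<open>0 < m\<close> \<open>0 < n\<close> by simp
qed

end
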